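(* Let $m,n\ge 1$, $A=[a_{ij}]$ an $m\times n$ matrix with entries in $\mathbb{R}\cup\{-\infty\}$, and $B=[b_{ji}]$ an $n\times m$ matrix with entries in $\mathbb{R}\cup\{+\infty\}$. Let $\lambda\in\mathbb{R}$ be an eigenvalue of the bipartite min-max-plus system $\mathcal{M}$ defined by $A,B$, let $A_\lambda=-\lambda\otimes A$, $B_\lambda=-\lambda\otimes B$, and define the sequence $x^*(l+1)=\mathcal{N}(x^*(l))$ for $l=0,1,2,\dots$ from an initial state vector $x^*(0)$. Suppose $x^*(r)=x^*(s)$ for some integers $r>s\ge 0$ and let $v=x^*(s)\oplus x^*(s+1)\oplus\cdots\oplus x^*(r-1)$. Then $\mathcal{N}(v)\ge v$ (componentwise).
   Context: Notation: $\epsilon=-\infty$, $\tau=+\infty$. For scalars, $r\oplus s=\max\{r,s\}$, $r\oplus' s=\min\{r,s\}$, $r\otimes s=r+s$; $\oplus$ of vectors is the componentwise maximum. For a scalar $\alpha\in\mathbb{R}$ and a matrix or vector $X$, $\alpha\otimes X$ adds $\alpha$ to every entry (infinite entries are unchanged). Max-plus product: $(A\otimes w)_i=\max_{1\le j\le n}(a_{ij}+w_j)$; min-plus product: $(B\otimes' u)_j=\min_{1\le i\le m}(b_{ji}+u_i)$. Convention for infinite sums: $-\infty+x=-\infty$ for $x\ne+\infty$, $+\infty+x=+\infty$ for $x\ne-\infty$, and in max-plus products $-\infty$ is absorbing while in min-plus products $+\infty$ is absorbing. For $v=\begin{pmatrix}u\\ w\end{pmatrix}$ ($u$ of length $m$,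 $w$ of length $n$): $\mathcal{M}(v)=\begin{pmatrix}A\otimes w\\ B\otimes' u\end{pmatrix}$ and $\mathcal{N}(v)=\begin{pmatrix}A_\lambda\otimes w\\ B_\lambda\otimes' u\end{pmatrix}$. A real number $\lambda$ is an eigenvalue of the system $x(l+1)=\mathcal{M}(x(l))$ if there exists $v\in\mathbb{R}^{m+n}$ with $\mathcal{M}(v)=\lambda\otimes v$. *)

theory Defs
  imports Complex_Main "HOL-Library.Extended_Real"
begin

definition mp_times :: "ereal \<Rightarrow> ereal \<Rightarrow> ereal" where
  "mp_times a b = (if a = -\<infinity> \<or> b = -\<infinity> then -\<infinity> else a + b)"

definition mp_times' :: "ereal \<Rightarrow> ereal \<Rightarrow> ereal" where
  "mp_times' a b = (if a = \<infinity> \<or> b = \<infinity> then \<infinity> else a + b)"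

text \<open>Vectors of length k are functions \<open>nat \<Rightarrow> ereal\<close>, only indices \<open>< k\<close> matter.
  An \<open>m\<times>n\<close> matrix is \<open>nat \<Rightarrow> nat \<Rightarrow> ereal\<close> with indices \<open>i < m\<close>, \<open>j < n\<close>.\<close>

definition maxplus_mv :: "(nat \<Rightarrow> nat \<Rightarrow> ereal) \<Rightarrow> nat \<Rightarrow> (nat \<Rightarrow> ereal) \<Rightarrow> nat \<Rightarrow> ereal" where
  "maxplus_mv A n w i = Max ((\<lambda>j. mp_times (A i j) (w j)) ` {..<n})"

definition minplus_mv :: "(nat \<Rightarrow> nat \<Rightarrow> ereal) \<Rightarrow> nat \<Rightarrow> (nat \<Rightarrow> ereal) \<Rightarrow> nat \<Rightarrow> ereal" where
  "minplus_mv B m u j = Min ((\<lambda>i. mp_times' (B j i) (u i)) ` {..<m})"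

definition bip_sys :: "nat \<Rightarrow> nat \<Rightarrow> (nat \<Rightarrow> nat \<Rightarrow> ereal) \<Rightarrow> (nat \<Rightarrow> nat \<Rightarrow> ereal)
    \<Rightarrow> (nat \<Rightarrow> ereal) \<times> (nat \<Rightarrow> ereal) \<Rightarrow> (nat \<Rightarrow> ereal) \<times> (nat \<Rightarrow> ereal)" where
  "bip_sys m n A B v = (maxplus_mv A n (snd v), minplus_mv B m (fst v))"

definition scal_mat :: "real \<Rightarrow> (nat \<Rightarrow> nat \<Rightarrow> ereal) \<Rightarrow> nat \<Rightarrow> nat \<Rightarrow> ereal" where
  "scal_mat \<alpha> X i j = ereal \<alpha> + X i j"

definition scal_vec :: "real \<Rightarrow> (nat \<Rightarrow> ereal) \<Rightarrow> nat \<Rightarrow> ereal" where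
  "scal_vec \<alpha> x i = ereal \<alpha> + x i"

definition finite_vec :: "nat \<Rightarrow> (nat \<Rightarrow> ereal) \<Rightarrow> bool" where
  "finite_vec k x \<longleftrightarrow> (\<forall>i<k. \<bar>x i\<bar> \<noteq> \<infinity>)"

definition is_eigenvalue :: "nat \<Rightarrow> nat \<Rightarrow> (nat \<Rightarrow> nat \<Rightarrow> ereal) \<Rightarrow> (nat \<Rightarrow> nat \<Rightarrow> ereal) \<Rightarrow> real \<Rightarrow> bool" where
  "is_eigenvalue m n A B lam \<longleftrightarrow>
     (\<exists>u w. finite_vec m u \<and> finite_vec n w \<and>
        (\<forall>i<m. fst (bip_sys m n A B (u, w)) i = scal_vec lam u i) \<and>
        (\<forall>j<n. snd (bip_sys m n A B (u, w)) j = scal_vec lam w j))"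

definition state_le :: "nat \<Rightarrow> nat \<Rightarrow> (nat \<Rightarrow> ereal) \<times> (nat \<Rightarrow> ereal) \<Rightarrow> (nat \<Rightarrow> ereal) \<times> (nat \<Rightarrow> ereal) \<Rightarrow> bool" where
  "state_le m n v v' \<longleftrightarrow> (\<forall>i<m. fst v i \<le> fst v' i) \<and> (\<forall>j<n. snd v j \<le> snd v' j)"

end

theory Submission
  imports Defs
begin

text \<open>\<open>\<N>\<close> is monotone, and along the cycle
  \<open>x\<^sup>*(s), \<dots>, x\<^sup>*(r-1)\<close> every state is the image under \<open>\<N>\<close> of a state of the same cycle
  (\<open>x\<^sup>*(s) = x\<^sup>*(r) = \<N>(x\<^sup>*(r-1))\<close>). As each state of the cycle lies below \<open>v\<close>, monotonicity gives
  \<open>x\<^sup>*(k) \<le> \<N>(v)\<close> for every \<open>k\<close> of the cycle, and taking the maximum over \<open>k\<close> yields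
  \<open>v \<le> \<N>(v)\<close>.\<close>

lemma mp_times_mono: "b \<le> b' \<Longrightarrow> mp_times a b \<le> mp_times a b'"
  unfolding mp_times_def by (auto intro: add_left_mono)

lemma mp_times'_mono: "b \<le> b' \<Longrightarrow> mp_times' a b \<le> mp_times' a b'"
  unfolding mp_times'_def by (auto intro: add_left_mono)

text \<open>No nonemptiness hypothesis is needed: for an empty index range both sides are the
  same unspecified value \<open>Max {}\<close> (resp. \<open>Min {}\<close>).\<close>

lemma maxplus_mv_mono:
  assumes "\<And>j. j < n \<Longrightarrow> w j \<le> w' j"
  shows "maxplus_mv A n w i \<le> maxplus_mv A n w' i"
proof (cases "n = 0")
  case False
  then show ?thesis
    unfolding maxplus_mv_def
    by (subst Max_le_iff) (auto intro: order.trans[OF mp_times_mono[OF assms] Max_ge])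
qed (simp add: maxplus_mv_def)

lemma minplus_mv_mono:
  assumes "\<And>i. i < m \<Longrightarrow> u i \<le> u' i"
  shows "minplus_mv B m u j \<le> minplus_mv B m u' j"
proof (cases "m = 0")
  case False
  then show ?thesis
    unfolding minplus_mv_def
    by (subst Min_ge_iff) (auto intro: order.trans[OF Min_le mp_times'_mono[OF assms]])
qed (simp add: minplus_mv_def)

lemma bip_sys_mono:
  "state_le m n v v' \<Longrightarrow> state_le m n (bip_sys m n A B v) (bip_sys m n A B v')"
  unfolding state_le_def bip_sys_def by (auto intro: maxplus_mv_mono minplus_mv_mono)

definition state_Max :: "(nat \<Rightarrow> (nat \<Rightarrow> ereal) \<times> (nat \<Rightarrow> ereal)) \<Rightarrow> nat set
    \<Rightarrow> (nat \<Rightarrow> ereal) \<times> (nat \<Rightarrow> ereal)" where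
  "state_Max x L = ((\<lambda>i. Max ((\<lambda>l. fst (x l) i) ` L)), (\<lambda>j. Max ((\<lambda>l. snd (x l) j) ` L)))"

lemma state_le_state_Max: "finite L \<Longrightarrow> l \<in> L \<Longrightarrow> state_le m n (x l) (state_Max x L)"
  unfolding state_le_def state_Max_def by auto

lemma state_Max_le:
  "finite L \<Longrightarrow> L \<noteq> {} \<Longrightarrow> (\<And>l. l \<in> L \<Longrightarrow> state_le m n (x l) v) \<Longrightarrow> state_le m n (state_Max x L) v"
  unfolding state_le_def state_Max_def by auto

lemma cycle_state_is_image:
  assumes step: "\<And>l. x (Suc l) = f (x l)" and "s < r" "x r = x s" and k: "k \<in> {s..<r}"
  obtains l where "l \<in> {s..<r}" "x k = f (x l)"
proof (cases "k = s")
  case True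
  with that[of "r - 1"] step[of "r - 1"] assms(2,3) show ?thesis by simp
next
  case False
  show ?thesis
  proof (rule that[of "k - 1"])
    show "k - 1 \<in> {s..<r}" using k False by auto
    show "x k = f (x (k - 1))" using step[of "k - 1"] k False by (cases k) auto
  qed
qed

lemma state_Max_cycle_le_image:
  assumes mono: "\<And>v v'. state_le m n v v' \<Longrightarrow> state_le m n (f v) (f v')"
    and step: "\<And>l. x (Suc l) = f (x l)" and "s < r" "x r = x s"
  shows "state_le m n (state_Max x {s..<r}) (f (state_Max x {s..<r}))"
proof (rule state_Max_le)
  fix k assume "k \<in> {s..<r}"
  with step \<open>s < r\<close> \<open>x r = x s\<close> obtain l where l: "l \<in> {s..<r}" "x k = f (x l)"
    by (rule cycle_state_is_image)
  show "state_le m n (x k) (f (state_Max x {s..<r}))"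
    unfolding \<open>x k = f (x l)\<close> by (intro mono state_le_state_Max l) simp
qed (use \<open>s < r\<close> in auto)

theorem theorem3:
  fixes m n :: nat and A B :: "nat \<Rightarrow> nat \<Rightarrow> ereal" and lam :: real
    and x :: "nat \<Rightarrow> (nat \<Rightarrow> ereal) \<times> (nat \<Rightarrow> ereal)" and r s :: nat
  assumes "m \<ge> 1" and "n \<ge> 1"
    and "\<forall>i<m. \<forall>j<n. A i j \<noteq> \<infinity>"
    and "\<forall>j<n. \<forall>i<m. B j i \<noteq> -\<infinity>"
    and "is_eigenvalue m n A B lam"
    and "finite_vec m (fst (x 0))" and "finite_vec n (snd (x 0))"
    and "\<forall>l. x (Suc l) = bip_sys m n (scal_mat (-lam) A) (scal_mat (-lam) B) (x l)"
    and "s < r" and "x r = x s"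
  shows "let v = ((\<lambda>i. Max ((\<lambda>l. fst (x l) i) ` {s..<r})),
                  (\<lambda>j. Max ((\<lambda>l. snd (x l) j) ` {s..<r})))
         in state_le m n v (bip_sys m n (scal_mat (-lam) A) (scal_mat (-lam) B) v)"
  unfolding Let_def state_Max_def[symmetric]
  by (rule state_Max_cycle_le_image[OF bip_sys_mono]) (use assms(8-10) in auto)

end
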